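(* Let $R$ be a ring with identity, ${}_RM$ a finitely generated semisimple left $R$-module and $\varphi:M\to M$ a nilpotent $R$-endomorphism. Then the centralizer $C_\varphi=\{\psi\in\mathrm{Hom}_R(M,M)\mid\psi\circ\varphi=\varphi\circ\psi\}$, as a $Z(R)$-subalgebra of $\mathrm{Hom}_R(M,M)$, is a homomorphic image (as $Z(R)$-algebras) of the opposite algebra of some $Z(R)$-subalgebra of the matrix algebra $M_{m\times m}(R[t])$, where $m=\dim_R(\ker(\varphi))$.
   Context: $Z(R)$ is the centre of $R$, $R[t]$ the polynomial ring over $R$ in a commuting indeterminate $t$, and $\dim_R$ denotes composition length. *)

theory Defs
  imports Main
begin

text \<open>The module M is the whole type 'm; the scalar action is the parameter smul.\<close>

definition left_module :: "('r::ring_1 \<Rightarrow> 'm::ab_group_add \<Rightarrow> 'm) \<Rightarrow> bool" where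
  "left_module smul \<longleftrightarrow>
     (\<forall>r x y. smul r (x + y) = smul r x + smul r y) \<and>
     (\<forall>r s x. smul (r + s) x = smul r x + smul s x) \<and>
     (\<forall>r s x. smul (r * s) x = smul r (smul s x)) \<and>
     (\<forall>x. smul 1 x = x)"

definition submodule :: "('r::ring_1 \<Rightarrow> 'm::ab_group_add \<Rightarrow> 'm) \<Rightarrow> 'm set \<Rightarrow> bool" where
  "submodule smul N \<longleftrightarrow> 0 \<in> N \<and> (\<forall>x\<in>N. \<forall>y\<in>N. x + y \<in> N) \<and> (\<forall>r. \<forall>x\<in>N. smul r x \<in> N)"

definition submodule_span :: "('r::ring_1 \<Rightarrow> 'm::ab_group_add \<Rightarrow> 'm) \<Rightarrow> 'm set \<Rightarrow> 'm set" where
  "submodule_span smul G = \<Inter> {N. submodule smul N \<and> G \<subseteq> N}"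

definition finitely_generated :: "('r::ring_1 \<Rightarrow> 'm::ab_group_add \<Rightarrow> 'm) \<Rightarrow> bool" where
  "finitely_generated smul \<longleftrightarrow> (\<exists>G. finite G \<and> submodule_span smul G = UNIV)"

definition simple_submodule :: "('r::ring_1 \<Rightarrow> 'm::ab_group_add \<Rightarrow> 'm) \<Rightarrow> 'm set \<Rightarrow> bool" where
  "simple_submodule smul N \<longleftrightarrow> submodule smul N \<and> N \<noteq> {0} \<and>
     (\<forall>P. submodule smul P \<and> P \<subseteq> N \<longrightarrow> P = {0} \<or> P = N)"

definition semisimple :: "('r::ring_1 \<Rightarrow> 'm::ab_group_add \<Rightarrow> 'm) \<Rightarrow> bool" where
  "semisimple smul \<longleftrightarrow> submodule_span smul (\<Union> {N. simple_submodule smul N}) = UNIV"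

definition R_linear :: "('r::ring_1 \<Rightarrow> 'm::ab_group_add \<Rightarrow> 'm) \<Rightarrow> ('m \<Rightarrow> 'm) \<Rightarrow> bool" where
  "R_linear smul f \<longleftrightarrow> (\<forall>x y. f (x + y) = f x + f y) \<and> (\<forall>r x. f (smul r x) = smul r (f x))"

definition nilpotent_map :: "('m::zero \<Rightarrow> 'm) \<Rightarrow> bool" where
  "nilpotent_map f \<longleftrightarrow> (\<exists>n. (f ^^ n) = (\<lambda>_. 0))"

definition kernel :: "('m \<Rightarrow> 'm::zero) \<Rightarrow> 'm set" where
  "kernel f = {x. f x = 0}"

definition comp_series :: "('r::ring_1 \<Rightarrow> 'm::ab_group_add \<Rightarrow> 'm) \<Rightarrow> 'm set \<Rightarrow> nat \<Rightarrow> bool" where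
  "comp_series smul N n \<longleftrightarrow> (\<exists>C :: nat \<Rightarrow> 'm set.
     C 0 = {0} \<and> C n = N \<and> (\<forall>i\<le>n. submodule smul (C i)) \<and>
     (\<forall>i<n. C i \<subset> C (Suc i) \<and>
        (\<forall>P. submodule smul P \<and> C i \<subseteq> P \<and> P \<subseteq> C (Suc i) \<longrightarrow> P = C i \<or> P = C (Suc i))))"

definition comp_length :: "('r::ring_1 \<Rightarrow> 'm::ab_group_add \<Rightarrow> 'm) \<Rightarrow> 'm set \<Rightarrow> nat" where
  "comp_length smul N = (LEAST n. comp_series smul N n)"

definition centre :: "'r::ring_1 set" where
  "centre = {z. \<forall>r. z * r = r * z}"

definition centralizer :: "('r::ring_1 \<Rightarrow> 'm::ab_group_add \<Rightarrow> 'm) \<Rightarrow> ('m \<Rightarrow> 'm) \<Rightarrow> ('m \<Rightarrow> 'm) set" where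
  "centralizer smul \<phi> = {\<psi>. R_linear smul \<psi> \<and> \<psi> \<circ> \<phi> = \<phi> \<circ> \<psi>}"

text \<open>A polynomial is a finitely supported coefficient sequence; t commutes with R.\<close>
type_synonym 'r rpoly = "nat \<Rightarrow> 'r"

definition is_rpoly :: "'r::zero rpoly \<Rightarrow> bool" where
  "is_rpoly p \<longleftrightarrow> finite {k. p k \<noteq> 0}"

definition rpoly_mult :: "'r::ring_1 rpoly \<Rightarrow> 'r rpoly \<Rightarrow> 'r rpoly" where
  "rpoly_mult p q = (\<lambda>n. \<Sum>k\<le>n. p k * q (n - k))"

definition rpoly_one :: "'r::ring_1 rpoly" where
  "rpoly_one = (\<lambda>k. if k = 0 then 1 else 0)"

text \<open>m x m matrices over R[t]: entries A i j (i, j < m), zero outside the index range.\<close>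
type_synonym 'r pmat = "nat \<Rightarrow> nat \<Rightarrow> 'r rpoly"

definition is_pmat :: "nat \<Rightarrow> 'r::zero pmat \<Rightarrow> bool" where
  "is_pmat m A \<longleftrightarrow> (\<forall>i j. (i < m \<and> j < m \<longrightarrow> is_rpoly (A i j)) \<and>
                          (\<not> (i < m \<and> j < m) \<longrightarrow> A i j = (\<lambda>_. 0)))"

definition pmat_add :: "'r::ring_1 pmat \<Rightarrow> 'r pmat \<Rightarrow> 'r pmat" where
  "pmat_add A B = (\<lambda>i j k. A i j k + B i j k)"

definition pmat_mult :: "nat \<Rightarrow> 'r::ring_1 pmat \<Rightarrow> 'r pmat \<Rightarrow> 'r pmat" where
  "pmat_mult m A B = (\<lambda>i j. \<lambda>k. \<Sum>l<m. rpoly_mult (A i l) (B l j) k)"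

definition pmat_one :: "nat \<Rightarrow> 'r::ring_1 pmat" where
  "pmat_one m = (\<lambda>i j. if i = j \<and> i < m then rpoly_one else (\<lambda>_. 0))"

definition pmat_scale :: "'r::ring_1 \<Rightarrow> 'r pmat \<Rightarrow> 'r pmat" where
  "pmat_scale z A = (\<lambda>i j k. z * A i j k)"

definition pmat_subalgebra :: "nat \<Rightarrow> 'r::ring_1 pmat set \<Rightarrow> bool" where
  "pmat_subalgebra m S \<longleftrightarrow>
     (\<forall>A\<in>S. is_pmat m A) \<and> pmat_one m \<in> S \<and> (\<lambda>i j k. 0) \<in> S \<and>
     (\<forall>A\<in>S. \<forall>B\<in>S. pmat_add A B \<in> S) \<and>
     (\<forall>A\<in>S. \<forall>B\<in>S. pmat_mult m A B \<in> S) \<and>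
     (\<forall>z\<in>centre. \<forall>A\<in>S. pmat_scale z A \<in> S)"

text \<open>In S^op the product of A and B is B A, so it must go to f A \<circ> f B.\<close>
definition op_alg_epi :: "('r::ring_1 \<Rightarrow> 'm::ab_group_add \<Rightarrow> 'm) \<Rightarrow> nat \<Rightarrow> 'r pmat set
      \<Rightarrow> ('r pmat \<Rightarrow> ('m \<Rightarrow> 'm)) \<Rightarrow> ('m \<Rightarrow> 'm) set \<Rightarrow> bool" where
  "op_alg_epi smul m S f T \<longleftrightarrow>
     f ` S = T \<and>
     (\<forall>A\<in>S. \<forall>B\<in>S. f (pmat_add A B) = (\<lambda>x. f A x + f B x)) \<and>
     (\<forall>A\<in>S. \<forall>B\<in>S. f (pmat_mult m B A) = f A \<circ> f B) \<and>
     f (pmat_one m) = id \<and>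
     (\<forall>z\<in>centre. \<forall>A\<in>S. f (pmat_scale z A) = (\<lambda>x. smul z (f A x)))"

end

theory Submission
  imports Defs "HOL-Library.Set_Algebras"
begin

(* View M as a module over R[t], with t acting as \<phi>. Because \<phi> is nilpotent, elements
   generating M modulo \<phi> M generate M over R[t] (Nakayama). A shortest such list has at most
   m = length (ker \<phi>) entries: its partial spans form a strictly increasing chain from \<phi> M to M,
   while a chain of submodules of M is detected by its intersections with ker \<phi> together with its
   sums with ker \<phi> (the preimages of a chain in \<phi> M), so length M \<le> length (ker \<phi>) + length (\<phi> M).
   With m generators g_j, an endomorphism \<psi> commuting with \<phi> is determined by the equations
   \<psi> (g_i) = \<Sum>_j a_ij(\<phi>) g_j. The matrices (a_ij) that occur form a Z(R)-subalgebra of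
   M_m(R[t]) mapping onto the centralizer, and since the product A B represents \<psi>_B \<circ> \<psi>_A the
   map is a homomorphism from the opposite algebra. *)

section \<open>Modules and submodules\<close>

locale lmodule =
  fixes smul :: "'r::ring_1 \<Rightarrow> 'm::ab_group_add \<Rightarrow> 'm"
  assumes left_module: "left_module smul"
begin

abbreviation submod :: "'m set \<Rightarrow> bool" where
  "submod N \<equiv> submodule smul N"

abbreviation span :: "'m set \<Rightarrow> 'm set" where
  "span G \<equiv> submodule_span smul G"

lemma smul_add: "smul r (x + y) = smul r x + smul r y"
  using left_module unfolding left_module_def by blast

lemma add_smul: "smul (r + s) x = smul r x + smul s x"
  using left_module unfolding left_module_def by blast

lemma smul_smul: "smul r (smul s x) = smul (r * s) x"
  using left_module unfolding left_module_def by metis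

lemma one_smul [simp]: "smul 1 x = x"
  using left_module unfolding left_module_def by blast

lemma zero_smul [simp]: "smul 0 x = 0"
  using add_smul[of 0 0 x] by simp

lemma smul_zero [simp]: "smul r 0 = 0"
  using smul_add[of r 0 0] by simp

lemma minus_one_smul: "smul (- 1) x = - x"
  using add_smul[of "- 1" 1 x] by (simp add: eq_neg_iff_add_eq_0)

lemma smul_sum: "smul r (sum f A) = (\<Sum>a\<in>A. smul r (f a))"
  by (induction A rule: infinite_finite_induct) (auto simp: smul_add)

lemma sum_smul: "smul (sum f A) x = (\<Sum>a\<in>A. smul (f a) x)"
  by (induction A rule: infinite_finite_induct) (auto simp: add_smul)

lemma submodule_zero: "submod N \<Longrightarrow> 0 \<in> N"
  unfolding submodule_def by blast

lemma submodule_add: "submod N \<Longrightarrow> x \<in> N \<Longrightarrow> y \<in> N \<Longrightarrow> x + y \<in> N"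
  unfolding submodule_def by blast

lemma submodule_smul: "submod N \<Longrightarrow> x \<in> N \<Longrightarrow> smul r x \<in> N"
  unfolding submodule_def by blast

lemma submodule_diff: "submod N \<Longrightarrow> x \<in> N \<Longrightarrow> y \<in> N \<Longrightarrow> x - y \<in> N"
  using submodule_add[of N x "- y"] submodule_smul[of N y "- 1"] by (simp add: minus_one_smul)

lemma submodule_UNIV: "submod UNIV"
  unfolding submodule_def by simp

lemma submodule_zero_set: "submod {0}"
  unfolding submodule_def by simp

lemma submodule_Int: "submod A \<Longrightarrow> submod B \<Longrightarrow> submod (A \<inter> B)"
  unfolding submodule_def by blast

lemma submodule_plus:
  assumes "submod A" "submod B"
  shows "submod (A + B)"
  unfolding submodule_def
proof (intro conjI ballI allI)
  show "0 \<in> A + B"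
    using set_plus_intro[of 0 A 0 B] assms submodule_zero by simp
next
  fix x y assume "x \<in> A + B" "y \<in> A + B"
  then obtain a b a' b' where "x = a + b" "y = a' + b'" "a \<in> A" "b \<in> B" "a' \<in> A" "b' \<in> B"
    by (auto elim!: set_plus_elim)
  then show "x + y \<in> A + B"
    using set_plus_intro[of "a + a'" A "b + b'" B] assms submodule_add by (simp add: algebra_simps)
next
  fix r x assume "x \<in> A + B"
  then obtain a b where "x = a + b" "a \<in> A" "b \<in> B"
    by (auto elim!: set_plus_elim)
  then show "smul r x \<in> A + B"
    using assms submodule_smul by (auto simp: smul_add)
qed

lemma R_linear_zero: "R_linear smul f \<Longrightarrow> f 0 = 0"
  unfolding R_linear_def by (metis add_cancel_right_right)

lemma R_linear_add: "R_linear smul f \<Longrightarrow> f (x + y) = f x + f y"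
  unfolding R_linear_def by blast

lemma R_linear_smul: "R_linear smul f \<Longrightarrow> f (smul r x) = smul r (f x)"
  unfolding R_linear_def by blast

lemma R_linear_sum: "R_linear smul f \<Longrightarrow> f (sum g A) = (\<Sum>a\<in>A. f (g a))"
  by (induction A rule: infinite_finite_induct) (simp_all add: R_linear_zero R_linear_add)

lemma R_linear_funpow:
  assumes "R_linear smul f"
  shows "R_linear smul (f ^^ k)"
proof (induction k)
  case 0
  then show ?case
    by (simp add: R_linear_def)
next
  case (Suc k)
  show ?case
    unfolding R_linear_def funpow.simps comp_def
    by (simp add: R_linear_add[OF assms] R_linear_add[OF Suc] R_linear_smul[OF assms]
        R_linear_smul[OF Suc])
qed

lemma submodule_image:
  assumes "R_linear smul f" "submod E"
  shows "submod (f ` E)"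
  unfolding submodule_def
proof (intro conjI ballI allI)
  show "0 \<in> f ` E"
    using R_linear_zero[OF assms(1)] submodule_zero[OF assms(2)] by force
next
  fix x y assume "x \<in> f ` E" "y \<in> f ` E"
  then obtain a b where "a \<in> E" "b \<in> E" "x = f a" "y = f b" by blast
  moreover from this have "f (a + b) \<in> f ` E"
    using submodule_add[OF assms(2)] by blast
  ultimately show "x + y \<in> f ` E"
    using assms(1) unfolding R_linear_def by simp
next
  fix r x assume "x \<in> f ` E"
  then obtain a where "a \<in> E" "x = f a" by blast
  moreover from this have "f (smul r a) \<in> f ` E"
    using submodule_smul[OF assms(2)] by blast
  ultimately show "smul r x \<in> f ` E"
    using assms(1) unfolding R_linear_def by simp
qed

lemma plus_subset_submodule: "submod N \<Longrightarrow> A \<subseteq> N \<Longrightarrow> B \<subseteq> N \<Longrightarrow> A + B \<subseteq> N"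
  unfolding set_plus_def by (blast intro: submodule_add)

lemma subset_plus_left: "submod B \<Longrightarrow> A \<subseteq> A + B"
  using set_zero_plus2[of B A] submodule_zero by (simp add: add.commute)

lemma subset_plus_right: "submod A \<Longrightarrow> B \<subseteq> A + B"
  using set_zero_plus2 submodule_zero by blast

lemma modular_law:
  assumes "submod E" "A \<subseteq> E"
  shows "E \<inter> (A + L) = A + (E \<inter> L)"
proof
  show "E \<inter> (A + L) \<subseteq> A + (E \<inter> L)"
  proof
    fix x assume "x \<in> E \<inter> (A + L)"
    then obtain a l where "x = a + l" "a \<in> A" "l \<in> L" "x \<in> E"
      unfolding set_plus_def by blast
    moreover from this have "l \<in> E"
      using submodule_diff[OF assms(1), of x a] assms(2) by auto
    ultimately show "x \<in> A + (E \<inter> L)" by blast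
  qed
  show "A + (E \<inter> L) \<subseteq> E \<inter> (A + L)"
    using plus_subset_submodule[OF assms(1)] assms(2) set_plus_mono2[of A A "E \<inter> L" L] by blast
qed

lemma span_least: "submod N \<Longrightarrow> G \<subseteq> N \<Longrightarrow> span G \<subseteq> N"
  unfolding submodule_span_def by blast

lemma span_superset: "G \<subseteq> span G"
  unfolding submodule_span_def by blast

lemma submodule_span: "submod (span G)"
  unfolding submodule_span_def submodule_def by blast

lemma span_mono: "G \<subseteq> H \<Longrightarrow> span G \<subseteq> span H"
  using span_least[OF submodule_span] span_superset by blast

lemma span_empty: "span {} = {0}"
  using span_least[OF submodule_zero_set] submodule_zero[OF submodule_span] by blast

section \<open>Chains of submodules\<close>

definition submodule_chain :: "'m set \<Rightarrow> 'm set set \<Rightarrow> bool" where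
  "submodule_chain N \<C> \<longleftrightarrow> finite \<C> \<and> subset.chain {E. submod E \<and> E \<subseteq> N} \<C>"

lemma submodule_chainD:
  assumes "submodule_chain N \<C>"
  shows "finite \<C>" "E \<in> \<C> \<Longrightarrow> submod E" "E \<in> \<C> \<Longrightarrow> E \<subseteq> N"
    "E \<in> \<C> \<Longrightarrow> F \<in> \<C> \<Longrightarrow> E \<subseteq> F \<or> F \<subseteq> E"
  using assms unfolding submodule_chain_def subset_chain_def by blast+

lemma submodule_chain_UNIV: "submodule_chain N \<C> \<Longrightarrow> submodule_chain UNIV \<C>"
  unfolding submodule_chain_def subset_chain_def by blast

lemma submodule_chain_image:
  assumes "submodule_chain N \<C>"
    and "\<And>E. E \<in> \<C> \<Longrightarrow> submod (f E) \<and> f E \<subseteq> N'"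
    and "\<And>E F. E \<in> \<C> \<Longrightarrow> F \<in> \<C> \<Longrightarrow> E \<subseteq> F \<Longrightarrow> f E \<subseteq> f F"
  shows "submodule_chain N' (f ` \<C>)"
  unfolding submodule_chain_def subset_chain_def
proof (intro conjI ballI subsetI)
  show "finite (f ` \<C>)"
    using submodule_chainD(1)[OF assms(1)] by simp
  show "X \<in> {E. submod E \<and> E \<subseteq> N'}" if "X \<in> f ` \<C>" for X
    using that assms(2) by auto
  show "X \<subseteq> Y \<or> Y \<subseteq> X" if XY: "X \<in> f ` \<C>" "Y \<in> f ` \<C>" for X Y
  proof -
    obtain E F where "E \<in> \<C>" "F \<in> \<C>" "X = f E" "Y = f F"
      using XY by blast
    then show ?thesis
      using assms(3) submodule_chainD(4)[OF assms(1)] by metis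
  qed
qed

lemma submodule_chain_Int:
  "submodule_chain N \<C> \<Longrightarrow> submod L \<Longrightarrow> submodule_chain L ((\<lambda>E. E \<inter> L) ` \<C>)"
  by (rule submodule_chain_image) (auto simp: submodule_Int submodule_chainD(2))

lemma submodule_chain_Un:
  assumes "submodule_chain N \<P>" "submodule_chain N \<Q>" "\<And>P Q. P \<in> \<P> \<Longrightarrow> Q \<in> \<Q> \<Longrightarrow> P \<subseteq> Q"
  shows "submodule_chain N (\<P> \<union> \<Q>)"
  unfolding submodule_chain_def subset_chain_def
proof (intro conjI ballI)
  show "finite (\<P> \<union> \<Q>)"
    using submodule_chainD(1) assms(1,2) by simp
  show "\<P> \<union> \<Q> \<subseteq> {E. submod E \<and> E \<subseteq> N}"
    using submodule_chainD(2,3)[OF assms(1)] submodule_chainD(2,3)[OF assms(2)] by blast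
  show "X \<subseteq> Y \<or> Y \<subseteq> X" if "X \<in> \<P> \<union> \<Q>" "Y \<in> \<P> \<union> \<Q>" for X Y
    using that submodule_chainD(4)[OF assms(1)] submodule_chainD(4)[OF assms(2)] assms(3) by blast
qed

lemma eq_if_Int_eq_plus_eq:
  assumes "submod E" "submod E'" "submod L" "E \<subseteq> E'"
    and "E \<inter> L = E' \<inter> L" "E + L = E' + L"
  shows "E = E'"
proof -
  have "E' = E' \<inter> (E' + L)"
    using subset_plus_left[OF assms(3)] by blast
  also have "\<dots> = E' \<inter> (E + L)"
    using assms(6) by simp
  also have "\<dots> = E + (E' \<inter> L)"
    by (rule modular_law[OF assms(2,4)])
  also have "\<dots> = E + (E \<inter> L)"
    using assms(5) by simp
  also have "\<dots> = E"
    using plus_subset_submodule[OF assms(1) order_refl Int_lower1]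
      subset_plus_left[OF submodule_Int[OF assms(1,3)], of E]
    by (rule subset_antisym)
  finally show ?thesis by simp
qed

lemma top_separated_by_Int_or_plus:
  assumes "submodule_chain N \<C>" "submod L" "X \<in> \<C>" "\<forall>E\<in>\<C>. E \<subseteq> X"
  shows "X \<inter> L \<notin> (\<lambda>E. E \<inter> L) ` (\<C> - {X}) \<or> X + L \<notin> (\<lambda>E. E + L) ` (\<C> - {X})"
proof (rule ccontr)
  assume "\<not> ?thesis"
  then obtain E1 E2 where E12: "E1 \<in> \<C> - {X}" "E2 \<in> \<C> - {X}" "E1 \<inter> L = X \<inter> L" "E2 + L = X + L"
    by auto
  define E where "E = E1 \<union> E2"
  have "E = E1 \<or> E = E2"
    using E12 submodule_chainD(4)[OF assms(1)] unfolding E_def by blast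
  then have E: "E \<in> \<C> - {X}"
    using E12 by auto
  have "E \<subseteq> X" "submod E" "submod X"
    using E assms submodule_chainD(2)[OF assms(1)] by auto
  moreover have "E \<inter> L = X \<inter> L"
    using E12(3) \<open>E \<subseteq> X\<close> unfolding E_def by blast
  moreover have "E + L = X + L"
    using E12(4) set_plus_mono2[of E2 E L L] set_plus_mono2[of E X L L] \<open>E \<subseteq> X\<close>
    unfolding E_def by blast
  ultimately have "E = X"
    using eq_if_Int_eq_plus_eq[OF _ _ assms(2)] by blast
  then show False
    using E by blast
qed

lemma chain_card_le_Int_plus:
  assumes "submodule_chain N \<C>" "\<C> \<noteq> {}" "submod L"
  shows "card \<C> + 1 \<le> card ((\<lambda>E. E \<inter> L) ` \<C>) + card ((\<lambda>E. E + L) ` \<C>)"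
  using assms(1,2)
proof (induction "card \<C>" arbitrary: \<C> N)
  case 0
  then show ?case
    using submodule_chainD(1)[OF "0.prems"(1)] by simp
next
  case (Suc n)
  define X where "X = \<Union>\<C>"
  have fin: "finite \<C>"
    using submodule_chainD(1)[OF Suc.prems(1)] .
  have X: "X \<in> \<C>" "\<forall>E\<in>\<C>. E \<subseteq> X"
    using Union_in_chain[OF fin Suc.prems(2)] Suc.prems(1)
    unfolding X_def submodule_chain_def by auto
  define \<C>' where "\<C>' = \<C> - {X}"
  have C: "\<C> = insert X \<C>'" "X \<notin> \<C>'" "finite \<C>'" "submodule_chain N \<C>'"
    using X fin Suc.prems(1) unfolding \<C>'_def submodule_chain_def subset_chain_def by auto
  have "(\<lambda>E. E \<inter> L) ` \<C> = insert (X \<inter> L) ((\<lambda>E. E \<inter> L) ` \<C>')"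
    "(\<lambda>E. E + L) ` \<C> = insert (X + L) ((\<lambda>E. E + L) ` \<C>')"
    using C(1) by auto
  moreover have "X \<inter> L \<notin> (\<lambda>E. E \<inter> L) ` \<C>' \<or> X + L \<notin> (\<lambda>E. E + L) ` \<C>'"
    using top_separated_by_Int_or_plus[OF Suc.prems(1) assms(3) X] unfolding \<C>'_def .
  ultimately have new: "card ((\<lambda>E. E \<inter> L) ` \<C>') + card ((\<lambda>E. E + L) ` \<C>') + 1
      \<le> card ((\<lambda>E. E \<inter> L) ` \<C>) + card ((\<lambda>E. E + L) ` \<C>)"
    using C(3) by (auto simp: card_insert_if)
  show ?case
  proof (cases "\<C>' = {}")
    case True
    then show ?thesis
      using C(1) by simp
  next
    case False
    have "card \<C> = card \<C>' + 1"
      using C(1-3) by simp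
    moreover have "card \<C>' + 1 \<le> card ((\<lambda>E. E \<inter> L) ` \<C>') + card ((\<lambda>E. E + L) ` \<C>')"
      using Suc.hyps(1)[OF _ C(4) False] Suc.hyps(2) calculation by simp
    ultimately show ?thesis
      using new by linarith
  qed
qed

lemma chain_card_le_Suc_if_maximal:
  assumes "submod L" "submod N" "L \<subseteq> N"
    and maximal: "\<And>P. submod P \<Longrightarrow> L \<subseteq> P \<Longrightarrow> P \<subseteq> N \<Longrightarrow> P = L \<or> P = N"
    and bound: "\<And>\<C>. submodule_chain L \<C> \<Longrightarrow> card \<C> \<le> a"
    and chain: "submodule_chain N \<C>"
  shows "card \<C> \<le> a + 1"
proof (cases "\<C> = {}")
  case True
  then show ?thesis by simp
next
  case False
  have Int: "card ((\<lambda>E. E \<inter> L) ` \<C>) \<le> a"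
    using bound submodule_chain_Int[OF chain assms(1)] .
  have "(\<lambda>E. E + L) ` \<C> \<subseteq> {L, N}"
  proof
    fix P assume "P \<in> (\<lambda>E. E + L) ` \<C>"
    then obtain E where E: "E \<in> \<C>" "P = E + L" by blast
    then have "submod E" "E \<subseteq> N"
      using submodule_chainD[OF chain] by auto
    then have "submod P" "L \<subseteq> P" "P \<subseteq> N"
      using E(2) submodule_plus[OF _ assms(1)] subset_plus_right
        plus_subset_submodule[OF assms(2) _ assms(3)] by auto
    then show "P \<in> {L, N}"
      using maximal by blast
  qed
  then have "card ((\<lambda>E. E + L) ` \<C>) \<le> card {L, N}"
    by (rule card_mono[rotated]) simp
  also have "\<dots> \<le> 2"
    by (simp add: card_insert_if)
  finally show ?thesis
    using Int chain_card_le_Int_plus[OF chain False assms(1)] by linarith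
qed

lemma chain_card_le_one_if_zero:
  assumes "submodule_chain {0} \<C>"
  shows "card \<C> \<le> 1"
proof -
  have "\<C> \<subseteq> {{0}}"
    using submodule_chainD(2,3)[OF assms] submodule_zero by auto
  then show ?thesis
    using card_mono[of "{{0}}" \<C>] by simp
qed

lemma comp_series_chain_card_le:
  assumes "comp_series smul N n" "submodule_chain N \<C>"
  shows "card \<C> \<le> n + 1"
proof -
  obtain C where C: "C 0 = {0}" "C n = N" "\<forall>i\<le>n. submod (C i)"
    "\<forall>i<n. C i \<subset> C (Suc i) \<and>
       (\<forall>P. submod P \<and> C i \<subseteq> P \<and> P \<subseteq> C (Suc i) \<longrightarrow> P = C i \<or> P = C (Suc i))"
    using assms(1) unfolding comp_series_def by (elim exE conjE) (intro that, assumption+)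
  have "\<forall>\<C>. submodule_chain (C k) \<C> \<longrightarrow> card \<C> \<le> k + 1" if "k \<le> n" for k
    using that
  proof (induction k)
    case 0
    then show ?case
      using chain_card_le_one_if_zero C(1) by simp
  next
    case (Suc k)
    then have k: "k < n"
      by simp
    then have "submod (C k)" "submod (C (Suc k))" "C k \<subseteq> C (Suc k)"
      using C(3,4) by auto
    with chain_card_le_Suc_if_maximal[of "C k" "C (Suc k)"] show ?case
      using C(4) Suc by simp
  qed
  then show ?thesis
    using C(2) assms(2) by blast
qed

section \<open>Semisimple modules\<close>

lemma submodule_sum_list: "(\<And>S. S \<in> set Ss \<Longrightarrow> submod S) \<Longrightarrow> submod (sum_list Ss)"
  by (induction Ss) (auto simp: submodule_zero_set submodule_plus)

lemma simple_submodule_submodule: "simple_submodule smul S \<Longrightarrow> submod S"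
  unfolding simple_submodule_def by blast

lemma semisimple_mem_sum_list_simple:
  assumes "semisimple smul"
  shows "\<exists>Ss. (\<forall>S\<in>set Ss. simple_submodule smul S) \<and> x \<in> sum_list Ss"
proof -
  define U where "U = {x. \<exists>Ss. (\<forall>S\<in>set Ss. simple_submodule smul S) \<and> x \<in> sum_list Ss}"
  have "submod U"
    unfolding submodule_def
  proof (intro conjI ballI allI)
    show "0 \<in> U"
      unfolding U_def by (intro CollectI exI[of _ "[]"]) simp
  next
    fix x y assume "x \<in> U" "y \<in> U"
    then obtain Ss Ts where "\<forall>S\<in>set Ss. simple_submodule smul S" "x \<in> sum_list Ss"
      "\<forall>S\<in>set Ts. simple_submodule smul S" "y \<in> sum_list Ts"
      unfolding U_def by blast
    then show "x + y \<in> U"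
      unfolding U_def by (intro CollectI exI[of _ "Ss @ Ts"]) auto
  next
    fix r x assume "x \<in> U"
    then show "smul r x \<in> U"
      unfolding U_def
      using submodule_smul[OF submodule_sum_list] simple_submodule_submodule by blast
  qed
  moreover have "\<Union> {N. simple_submodule smul N} \<subseteq> U"
    unfolding U_def by (force intro: exI[of _ "[_]"])
  ultimately have "U = UNIV"
    using span_least assms unfolding semisimple_def by blast
  then show ?thesis
    unfolding U_def by blast
qed

lemma finitely_generated_semisimple_sum_list_simple:
  assumes "semisimple smul" "finitely_generated smul"
  shows "\<exists>Ss. (\<forall>S\<in>set Ss. simple_submodule smul S) \<and> sum_list Ss = UNIV"
proof -
  obtain G where G: "finite G" "span G = UNIV"
    using assms(2) unfolding finitely_generated_def by blast
  have "\<exists>Ss. (\<forall>S\<in>set Ss. simple_submodule smul S) \<and> H \<subseteq> sum_list Ss" if "finite H" for H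
    using that
  proof (induction H rule: finite_induct)
    case empty
    then show ?case
      by (intro exI[of _ "[]"]) simp
  next
    case (insert x H)
    obtain Ss Ts where simple: "\<forall>S\<in>set Ss. simple_submodule smul S" "\<forall>S\<in>set Ts. simple_submodule smul S"
      and "H \<subseteq> sum_list Ss" "x \<in> sum_list Ts"
      using insert.IH semisimple_mem_sum_list_simple[OF assms(1)] by blast
    moreover have "submod (sum_list Ss)" "submod (sum_list Ts)"
      using simple submodule_sum_list simple_submodule_submodule by auto
    ultimately have "insert x H \<subseteq> sum_list Ss + sum_list Ts"
      using subset_plus_left[of "sum_list Ts" "sum_list Ss"]
        subset_plus_right[of "sum_list Ss" "sum_list Ts"] by blast
    then show ?case
      using simple by (intro exI[of _ "Ss @ Ts"]) auto
  qed
  then obtain Ss where "\<forall>S\<in>set Ss. simple_submodule smul S" "G \<subseteq> sum_list Ss"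
    using G(1) by blast
  moreover from this have "span G \<subseteq> sum_list Ss"
    using span_least submodule_sum_list simple_submodule_submodule by blast
  ultimately show ?thesis
    using G(2) by blast
qed

lemma sum_list_simple_chain_card_le:
  assumes "\<forall>S\<in>set Ss. simple_submodule smul S" "submodule_chain (sum_list Ss) \<C>"
  shows "card \<C> \<le> length Ss + 1"
  using assms
proof (induction Ss arbitrary: \<C>)
  case Nil
  then show ?case
    using chain_card_le_one_if_zero by simp
next
  case (Cons S Ss)
  let ?L = "sum_list Ss"
  have S: "simple_submodule smul S" "submod S" and L: "submod ?L"
    using Cons.prems(1) simple_submodule_submodule submodule_sum_list by auto
  have maximal: "P = ?L \<or> P = S + ?L" if P: "submod P" "?L \<subseteq> P" "P \<subseteq> S + ?L" for P
  proof -
    have "P = P \<inter> (?L + S)"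
      using P(3) by (simp only: add.commute[of S ?L] Int_absorb2)
    also have "\<dots> = ?L + (P \<inter> S)"
      by (rule modular_law[OF P(1,2)])
    finally have P_eq: "P = ?L + (P \<inter> S)" .
    have "P \<inter> S = {0} \<or> P \<inter> S = S"
      using S(1) submodule_Int[OF P(1) S(2)] unfolding simple_submodule_def by blast
    then show ?thesis
      using P_eq by (metis add.commute set_add_0_right set_zero)
  qed
  have "\<forall>S\<in>set Ss. simple_submodule smul S"
    using Cons.prems(1) by simp
  from chain_card_le_Suc_if_maximal[OF L submodule_plus[OF S(2) L] subset_plus_right[OF S(2)]
      maximal Cons.IH[OF this]]
  show ?case
    using Cons.prems(2) by simp
qed

lemma submodule_kernel: "R_linear smul f \<Longrightarrow> submod (kernel f)"
  using R_linear_zero[of f] unfolding submodule_def kernel_def R_linear_def by simp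

lemma plus_kernel_eq_vimage_image:
  assumes "R_linear smul f" "submod E"
  shows "E + kernel f = f -` (f ` E)"
proof
  have add: "f (x + y) = f x + f y" for x y
    using assms(1) unfolding R_linear_def by blast
  show "E + kernel f \<subseteq> f -` (f ` E)"
    unfolding set_plus_def kernel_def by (auto simp: add)
  show "f -` (f ` E) \<subseteq> E + kernel f"
  proof
    fix x assume "x \<in> f -` (f ` E)"
    then obtain e where "e \<in> E" "f x = f e" by auto
    moreover have "f (x - e) = f x - f e"
      using add[of "x - e" e] by (simp add: algebra_simps)
    ultimately show "x \<in> E + kernel f"
      using set_plus_intro[of e E "x - e" "kernel f"] unfolding kernel_def by simp
  qed
qed

end

lemma lift_Suc_mono_less_atMost:
  fixes V :: "nat \<Rightarrow> 'a::order"
  assumes step: "\<And>i. i < n \<Longrightarrow> V i < V (Suc i)" and "i < j" "j \<le> n"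
  shows "V i < V j"
  using assms(2,3)
proof (induction i j rule: less_Suc_induct)
  case (1 i)
  then show ?case
    using step by simp
next
  case (2 i j k)
  then show ?case
    by (meson less_imp_le_nat order.strict_trans order.trans)
qed

lemma card_image_atMost_if_step_less:
  fixes V :: "nat \<Rightarrow> 'a::order"
  assumes "\<And>i. i < n \<Longrightarrow> V i < V (Suc i)"
  shows "card (V ` {..n}) = n + 1"
proof -
  have "inj_on V {..n}"
    by (rule inj_onI)
      (metis assms atMost_iff linorder_cases lift_Suc_mono_less_atMost order.strict_implies_not_eq)
  then show ?thesis
    by (simp add: card_image)
qed

section \<open>Modules of finite length\<close>

locale finite_length_module = lmodule smul for smul :: "'r::ring_1 \<Rightarrow> 'm::ab_group_add \<Rightarrow> 'm" +
  assumes chain_card_bounded: "\<exists>b. \<forall>\<C>. submodule_chain UNIV \<C> \<longrightarrow> card \<C> \<le> b"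
begin

text \<open>The maximal number of members of a chain of submodules of N, one more than the
  composition length of N.\<close>
definition chain_height :: "'m set \<Rightarrow> nat" where
  "chain_height N = Max {card \<C> | \<C>. submodule_chain N \<C>}"

lemma chain_cards_finite: "finite {card \<C> | \<C>. submodule_chain N \<C>}"
proof -
  obtain b where "\<forall>\<C>. submodule_chain UNIV \<C> \<longrightarrow> card \<C> \<le> b"
    using chain_card_bounded by blast
  then have "{card \<C> | \<C>. submodule_chain N \<C>} \<subseteq> {..b}"
    using submodule_chain_UNIV by auto
  then show ?thesis
    using finite_subset by blast
qed

lemma card_le_chain_height: "submodule_chain N \<C> \<Longrightarrow> card \<C> \<le> chain_height N"
  unfolding chain_height_def by (rule Max_ge[OF chain_cards_finite]) blast

lemma chain_height_attained: "\<exists>\<C>. submodule_chain N \<C> \<and> card \<C> = chain_height N"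
proof -
  have "submodule_chain N {}"
    unfolding submodule_chain_def subset_chain_def by simp
  then have "chain_height N \<in> {card \<C> | \<C>. submodule_chain N \<C>}"
    unfolding chain_height_def by (intro Max_in[OF chain_cards_finite]) blast
  then show ?thesis
    by auto
qed

lemma chain_height_strict_mono:
  assumes "submod Q" "P \<subset> Q"
  shows "chain_height P < chain_height Q"
proof -
  obtain \<C> where \<C>: "submodule_chain P \<C>" "card \<C> = chain_height P"
    using chain_height_attained by blast
  have "Q \<notin> \<C>"
    using submodule_chainD(3)[OF \<C>(1)] assms(2) by blast
  moreover have "submodule_chain Q (insert Q \<C>)"
    using \<C>(1) assms unfolding submodule_chain_def subset_chain_def by auto
  ultimately show ?thesis
    using card_le_chain_height[of Q "insert Q \<C>"] \<C> submodule_chainD(1)[OF \<C>(1)] by simp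
qed

lemma comp_series_extend:
  assumes "comp_series smul X k" "submod N" "X \<subset> N"
    and maximal: "\<And>P. submod P \<Longrightarrow> X \<subseteq> P \<Longrightarrow> P \<subseteq> N \<Longrightarrow> P = X \<or> P = N"
  shows "comp_series smul N (Suc k)"
proof -
  obtain C where C: "C 0 = {0}" "C k = X" "\<forall>i\<le>k. submod (C i)"
    "\<forall>i<k. C i \<subset> C (Suc i) \<and>
       (\<forall>P. submod P \<and> C i \<subseteq> P \<and> P \<subseteq> C (Suc i) \<longrightarrow> P = C i \<or> P = C (Suc i))"
    using assms(1) unfolding comp_series_def by (elim exE conjE) (intro that, assumption+)
  define C' where "C' i = (if i \<le> k then C i else N)" for i
  have "C' 0 = {0}" "C' (Suc k) = N" "\<forall>i\<le>Suc k. submod (C' i)"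
    using C(1,3) assms(2) unfolding C'_def by auto
  moreover have "\<forall>i<Suc k. C' i \<subset> C' (Suc i) \<and>
      (\<forall>P. submod P \<and> C' i \<subseteq> P \<and> P \<subseteq> C' (Suc i) \<longrightarrow> P = C' i \<or> P = C' (Suc i))"
    using C(2,4) assms(3) maximal unfolding C'_def by (auto simp: less_Suc_eq)
  ultimately show ?thesis
    unfolding comp_series_def by blast
qed

lemma comp_series_exists: "submod N \<Longrightarrow> \<exists>n. comp_series smul N n"
proof (induction "chain_height N" arbitrary: N rule: less_induct)
  case less
  show ?case
  proof (cases "N = {0}")
    case True
    then show ?thesis
      unfolding comp_series_def
      by (intro exI[of _ 0] exI[of _ "\<lambda>_. {0}"]) (simp add: submodule_zero_set)
  next
    case False
    define proper where "proper X \<longleftrightarrow> submod X \<and> X \<subset> N" for X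
    obtain b where b: "\<forall>\<C>. submodule_chain UNIV \<C> \<longrightarrow> card \<C> \<le> b"
      using chain_card_bounded by blast
    have "proper {0}"
      unfolding proper_def using False submodule_zero_set submodule_zero[OF less.prems] by auto
    moreover have "chain_height X < Suc b" for X
      using chain_height_attained[of X] b submodule_chain_UNIV by (metis le_imp_less_Suc)
    ultimately obtain X where X: "proper X" "\<And>Y. proper Y \<Longrightarrow> chain_height Y \<le> chain_height X"
      using ex_has_greatest_nat[of proper "{0}" chain_height "Suc b"] by blast
    have maximal: "P = X \<or> P = N" if "submod P" "X \<subseteq> P" "P \<subseteq> N" for P
      using that X chain_height_strict_mono[of P X] unfolding proper_def by fastforce
    obtain k where "comp_series smul X k"
      using less.hyps X(1) chain_height_strict_mono[OF less.prems] unfolding proper_def by blast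
    then show ?thesis
      using comp_series_extend less.prems X(1) maximal unfolding proper_def by blast
  qed
qed

lemma comp_series_comp_length: "submod N \<Longrightarrow> comp_series smul N (comp_length smul N)"
  unfolding comp_length_def using comp_series_exists by (rule LeastI_ex)

lemma chain_card_le_comp_length:
  "submod N \<Longrightarrow> submodule_chain N \<C> \<Longrightarrow> card \<C> \<le> comp_length smul N + 1"
  using comp_series_chain_card_le comp_series_comp_length by blast

end

lemma (in lmodule) finite_length_module_if_semisimple:
  assumes "semisimple smul" "finitely_generated smul"
  shows "finite_length_module smul"
proof
  obtain Ss where "\<forall>S\<in>set Ss. simple_submodule smul S" "sum_list Ss = UNIV"
    using finitely_generated_semisimple_sum_list_simple[OF assms] by blast
  then show "\<exists>b. \<forall>\<C>. submodule_chain UNIV \<C> \<longrightarrow> card \<C> \<le> b"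
    using sum_list_simple_chain_card_le by metis
qed

lemma (in lmodule) shortest_generators_strict_chain:
  assumes W: "submod W" and xs: "span (set xs) + W = UNIV"
    and shortest: "\<And>ys. span (set ys) + W = UNIV \<Longrightarrow> length xs \<le> length ys"
    and i: "i < length xs"
  shows "span (set (take i xs)) + W \<subset> span (set (take (Suc i) xs)) + W"
proof -
  have "span (set (take i xs)) + W \<subseteq> span (set (take (Suc i) xs)) + W"
    by (intro set_plus_mono2 span_mono set_take_subset_set_take) simp_all
  moreover have "span (set (take i xs)) + W \<noteq> span (set (take (Suc i) xs)) + W"
  proof
    assume eq: "span (set (take i xs)) + W = span (set (take (Suc i) xs)) + W"
    define ys where "ys = take i xs @ drop (Suc i) xs"
    have Y: "submod (span (set ys) + W)"
      by (intro submodule_plus submodule_span W)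
    have "xs ! i \<in> set (take (Suc i) xs)"
      using i by (simp add: take_Suc_conv_app_nth)
    then have "xs ! i \<in> span (set (take (Suc i) xs)) + W"
      using span_superset subset_plus_left[OF W] by blast
    also have "\<dots> = span (set (take i xs)) + W"
      by (rule eq[symmetric])
    also have "\<dots> \<subseteq> span (set ys) + W"
      unfolding ys_def by (intro set_plus_mono2 span_mono) auto
    finally have "xs ! i \<in> span (set ys) + W" .
    moreover have "set ys \<subseteq> span (set ys) + W"
      using span_superset subset_plus_left[OF W] by blast
    moreover have "set xs = insert (xs ! i) (set ys)"
      using id_take_nth_drop[OF i] unfolding ys_def by (metis Un_insert_right list.simps(15) set_append)
    ultimately have "span (set xs) \<subseteq> span (set ys) + W"
      using span_least[OF Y] by simp
    then have "span (set ys) + W = UNIV"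
      using xs plus_subset_submodule[OF Y _ subset_plus_right[OF submodule_span]] by blast
    with shortest have "length xs \<le> length ys" .
    then show False
      using i unfolding ys_def by simp
  qed
  ultimately show ?thesis
    by blast
qed

context finite_length_module
begin

lemma chain_card_le_kernel_plus_image:
  assumes f: "R_linear smul f" and chain: "submodule_chain UNIV \<C>" and "\<C> \<noteq> {}"
  shows "card \<C> \<le> comp_length smul (kernel f) + chain_height (range f)"
proof -
  have K: "submod (kernel f)"
    using submodule_kernel[OF f] .
  have "card ((\<lambda>E. E \<inter> kernel f) ` \<C>) \<le> comp_length smul (kernel f) + 1"
    using chain_card_le_comp_length[OF K submodule_chain_Int[OF chain K]] .
  moreover have "card ((\<lambda>E. E + kernel f) ` \<C>) \<le> chain_height (range f)"
  proof -
    have "(\<lambda>E. E + kernel f) ` \<C> = (\<lambda>E. f -` (f ` E)) ` \<C>"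
      using plus_kernel_eq_vimage_image[OF f] submodule_chainD(2)[OF chain] by simp
    also have "\<dots> = vimage f ` (image f ` \<C>)"
      by (simp add: image_image)
    finally have "card ((\<lambda>E. E + kernel f) ` \<C>) \<le> card (image f ` \<C>)"
      using card_image_le[of "image f ` \<C>" "vimage f"] submodule_chainD(1)[OF chain] by simp
    also have "\<dots> \<le> chain_height (range f)"
      by (intro card_le_chain_height submodule_chain_image[OF chain])
        (auto simp: submodule_image[OF f] submodule_chainD(2)[OF chain])
    finally show ?thesis .
  qed
  ultimately show ?thesis
    using chain_card_le_Int_plus[OF chain assms(3) K] by linarith
qed

lemma strict_chain_above_image_length_le:
  assumes f: "R_linear smul f" and V: "\<And>i. i \<le> n \<Longrightarrow> submod (V i)" "V 0 = range f"
    and step: "\<And>i. i < n \<Longrightarrow> V i \<subset> V (Suc i)"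
  shows "n \<le> comp_length smul (kernel f)"
proof -
  have strict: "V i \<subset> V j" if "i < j" "j \<le> n" for i j
    using lift_Suc_mono_less_atMost[of n V, OF step that] .
  obtain \<P> where \<P>: "submodule_chain (range f) \<P>" "card \<P> = chain_height (range f)"
    using chain_height_attained by blast
  define \<V> where "\<V> = V ` {..n}"
  have mono: "V i \<subseteq> V j" if "i \<le> j" "j \<le> n" for i j
    using strict[of i j] that by (cases "i = j") auto
  have \<V>: "submodule_chain UNIV \<V>"
    unfolding submodule_chain_def subset_chain_def \<V>_def
  proof (intro conjI ballI subsetI)
    show "finite (V ` {..n})"
      by simp
    show "X \<in> {E. submod E \<and> E \<subseteq> UNIV}" if "X \<in> V ` {..n}" for X
      using that V(1) by auto
    show "X \<subseteq> Y \<or> Y \<subseteq> X" if "X \<in> V ` {..n}" "Y \<in> V ` {..n}" for X Y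
      using that mono nat_le_linear by (metis atMost_iff imageE)
  qed
  have "\<P> \<inter> \<V> \<subseteq> {V 0}"
  proof
    fix X assume "X \<in> \<P> \<inter> \<V>"
    then obtain i where "i \<le> n" "X = V i" "X \<subseteq> V 0"
      using submodule_chainD(3)[OF \<P>(1)] V(2) unfolding \<V>_def by auto
    then show "X \<in> {V 0}"
      using strict[of 0 i] by (cases "i = 0") auto
  qed
  then have "card \<P> + card \<V> \<le> card (\<P> \<union> \<V>) + 1"
    using card_Un_Int[of \<P> \<V>] card_mono[of "{V 0}" "\<P> \<inter> \<V>"] submodule_chainD(1)[OF \<P>(1)]
    unfolding \<V>_def by simp
  moreover have "submodule_chain UNIV (\<P> \<union> \<V>)"
  proof (rule submodule_chain_Un[OF submodule_chain_UNIV[OF \<P>(1)] \<V>])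
    fix P Q assume "P \<in> \<P>" "Q \<in> \<V>"
    then obtain i where "i \<le> n" "Q = V i" "P \<subseteq> V 0"
      using submodule_chainD(3)[OF \<P>(1)] V(2) unfolding \<V>_def by auto
    then show "P \<subseteq> Q"
      using mono[of 0 i] by auto
  qed
  ultimately show ?thesis
    using chain_card_le_kernel_plus_image[OF f, of "\<P> \<union> \<V>"] \<P>(2)
      card_image_atMost_if_step_less[of n V, OF step] unfolding \<V>_def by fastforce
qed

lemma generators_mod_image:
  assumes f: "R_linear smul f" and "finitely_generated smul"
  shows "\<exists>xs. length xs \<le> comp_length smul (kernel f) \<and> span (set xs) + range f = UNIV"
proof -
  have W: "submod (range f)"
    using submodule_image[OF f submodule_UNIV] by simp
  obtain G where "finite G" "span G = UNIV"
    using assms(2) unfolding finitely_generated_def by blast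
  moreover obtain gs where "set gs = G"
    using finite_list[OF \<open>finite G\<close>] by blast
  ultimately have "span (set gs) + range f = UNIV"
    using subset_plus_left[OF W, of UNIV] by auto
  then obtain xs where xs: "span (set xs) + range f = UNIV"
    and shortest: "\<And>ys. span (set ys) + range f = UNIV \<Longrightarrow> length xs \<le> length ys"
    using ex_has_least_nat[of "\<lambda>xs. span (set xs) + range f = UNIV" gs length] by blast
  have "length xs \<le> comp_length smul (kernel f)"
  proof (rule strict_chain_above_image_length_le[OF f, where V = "\<lambda>i. span (set (take i xs)) + range f"])
    show "submod (span (set (take i xs)) + range f)" for i
      by (intro submodule_plus submodule_span W)
    show "span (set (take 0 xs)) + range f = range f"
      by (simp add: span_empty)
    show "span (set (take i xs)) + range f \<subset> span (set (take (Suc i) xs)) + range f"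
      if "i < length xs" for i
      using shortest_generators_strict_chain[OF W xs shortest that] .
  qed
  with xs show ?thesis
    by blast
qed

end

section \<open>Polynomials and matrices over R[t]\<close>

lemma is_rpoly_iff_bounded: "is_rpoly p \<longleftrightarrow> (\<exists>d. \<forall>k. p k \<noteq> 0 \<longrightarrow> k \<le> d)"
  unfolding is_rpoly_def finite_nat_set_iff_bounded_le by simp

lemma is_rpoly_zero: "is_rpoly (\<lambda>k. 0)"
  unfolding is_rpoly_def by simp

lemma is_rpoly_one: "is_rpoly rpoly_one"
  unfolding is_rpoly_def rpoly_one_def by simp

lemma is_rpoly_add: "is_rpoly p \<Longrightarrow> is_rpoly q \<Longrightarrow> is_rpoly (\<lambda>k. p k + q k :: 'a::monoid_add)"
  unfolding is_rpoly_def
  by (rule finite_subset[of _ "{k. p k \<noteq> 0} \<union> {k. q k \<noteq> 0}"]) auto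

lemma is_rpoly_sum:
  "(\<And>l. l \<in> A \<Longrightarrow> is_rpoly (F l)) \<Longrightarrow> is_rpoly (\<lambda>k. \<Sum>l\<in>A. F l k :: 'a::comm_monoid_add)"
  by (induction A rule: infinite_finite_induct) (simp_all add: is_rpoly_zero is_rpoly_add)

lemma is_rpoly_scale: "is_rpoly p \<Longrightarrow> is_rpoly (\<lambda>k. z * p k :: 'a::mult_zero)"
  unfolding is_rpoly_def by (rule finite_subset[rotated]) auto

lemma is_rpoly_mult:
  assumes "is_rpoly p" "is_rpoly q"
  shows "is_rpoly (rpoly_mult p q)"
proof -
  obtain a b where a: "\<And>k. p k \<noteq> 0 \<Longrightarrow> k \<le> a" and b: "\<And>k. q k \<noteq> 0 \<Longrightarrow> k \<le> b"
    using assms unfolding is_rpoly_iff_bounded by blast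
  have "rpoly_mult p q n = 0" if "a + b < n" for n
  proof -
    have "p k * q (n - k) = 0" if "k \<le> n" for k
    proof (cases "k \<le> a")
      case True
      then have "q (n - k) = 0"
        using b[of "n - k"] \<open>a + b < n\<close> by linarith
      then show ?thesis by simp
    next
      case False
      then show ?thesis
        using a[of k] by (metis mult_zero_left)
    qed
    then show ?thesis
      unfolding rpoly_mult_def by simp
  qed
  then show ?thesis
    unfolding is_rpoly_iff_bounded by (meson not_le)
qed

lemma is_pmat_entry: "is_pmat m A \<Longrightarrow> i < m \<Longrightarrow> j < m \<Longrightarrow> is_rpoly (A i j)"
  unfolding is_pmat_def by blast

lemma is_pmat_outside: "is_pmat m A \<Longrightarrow> \<not> (i < m \<and> j < m) \<Longrightarrow> A i j = (\<lambda>_. 0)"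
  unfolding is_pmat_def by blast

lemma is_pmat_zero: "is_pmat m (\<lambda>i j k. 0)"
  unfolding is_pmat_def using is_rpoly_zero by auto

lemma is_pmat_one: "is_pmat m (pmat_one m)"
  unfolding is_pmat_def pmat_one_def using is_rpoly_one is_rpoly_zero by auto

lemma is_pmat_add: "is_pmat m A \<Longrightarrow> is_pmat m B \<Longrightarrow> is_pmat m (pmat_add A B)"
  unfolding is_pmat_def pmat_add_def by (auto intro: is_rpoly_add)

lemma is_pmat_scale: "is_pmat m A \<Longrightarrow> is_pmat m (pmat_scale z A)"
  unfolding is_pmat_def pmat_scale_def by (auto intro: is_rpoly_scale)

lemma is_pmat_mult:
  assumes "is_pmat m A" "is_pmat m B"
  shows "is_pmat m (pmat_mult m A B)"
  unfolding is_pmat_def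
proof (intro allI conjI impI)
  fix i j assume "i < m \<and> j < m"
  then show "is_rpoly (pmat_mult m A B i j)"
    unfolding pmat_mult_def using assms
    by (intro is_rpoly_sum is_rpoly_mult) (auto intro: is_pmat_entry)
next
  fix i j assume "\<not> (i < m \<and> j < m)"
  then have "rpoly_mult (A i l) (B l j) = (\<lambda>_. 0)" if "l < m" for l
    using that is_pmat_outside[OF assms(1), of i l] is_pmat_outside[OF assms(2), of l j]
    unfolding rpoly_mult_def by auto
  then show "pmat_mult m A B i j = (\<lambda>_. 0)"
    unfolding pmat_mult_def by (simp add: fun_eq_iff)
qed

section \<open>Endomorphisms commuting with a nilpotent endomorphism\<close>

context lmodule
begin

lemma centralizer_R_linear: "\<psi> \<in> centralizer smul \<phi> \<Longrightarrow> R_linear smul \<psi>"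
  unfolding centralizer_def by blast

lemma centralizer_commute: "\<psi> \<in> centralizer smul \<phi> \<Longrightarrow> \<psi> (\<phi> x) = \<phi> (\<psi> x)"
  by (simp add: centralizer_def fun_eq_iff)

lemma centralizer_commute_funpow: "\<psi> \<in> centralizer smul \<phi> \<Longrightarrow> \<psi> ((\<phi> ^^ k) x) = (\<phi> ^^ k) (\<psi> x)"
  by (induction k) (simp_all add: centralizer_commute)

lemma centralizer_id: "id \<in> centralizer smul \<phi>"
  unfolding centralizer_def R_linear_def by simp

lemma centralizer_zero: "R_linear smul \<phi> \<Longrightarrow> (\<lambda>_. 0) \<in> centralizer smul \<phi>"
  unfolding centralizer_def by (auto simp: R_linear_def R_linear_zero fun_eq_iff)

lemma centralizer_comp:
  "\<psi> \<in> centralizer smul \<phi> \<Longrightarrow> \<chi> \<in> centralizer smul \<phi> \<Longrightarrow> \<psi> \<circ> \<chi> \<in> centralizer smul \<phi>"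
  unfolding centralizer_def R_linear_def by (simp add: fun_eq_iff)

lemma centralizer_add:
  assumes "R_linear smul \<phi>" "\<psi> \<in> centralizer smul \<phi>" "\<chi> \<in> centralizer smul \<phi>"
  shows "(\<lambda>x. \<psi> x + \<chi> x) \<in> centralizer smul \<phi>"
  using assms unfolding centralizer_def R_linear_def by (simp add: fun_eq_iff smul_add algebra_simps)

lemma centralizer_scale:
  assumes "R_linear smul \<phi>" "z \<in> centre" "\<psi> \<in> centralizer smul \<phi>"
  shows "(\<lambda>x. smul z (\<psi> x)) \<in> centralizer smul \<phi>"
proof -
  have "z * r = r * z" for r
    using assms(2) unfolding centre_def by blast
  then show ?thesis
    using assms(1,3) unfolding centralizer_def R_linear_def
    by (simp add: fun_eq_iff smul_add smul_smul)
qed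

end

locale nilpotent_endomorphism = lmodule smul for smul :: "'r::ring_1 \<Rightarrow> 'm::ab_group_add \<Rightarrow> 'm" +
  fixes \<phi> :: "'m \<Rightarrow> 'm"
  assumes linear: "R_linear smul \<phi>" and nilpotent: "nilpotent_map \<phi>"
begin

definition nil_index :: nat where
  "nil_index = (LEAST n. \<phi> ^^ n = (\<lambda>_. 0))"

lemma funpow_ge_nil_index: "nil_index \<le> k \<Longrightarrow> (\<phi> ^^ k) x = 0"
proof -
  assume k: "nil_index \<le> k"
  have "\<phi> ^^ nil_index = (\<lambda>_. 0)"
    unfolding nil_index_def using nilpotent unfolding nilpotent_map_def by (rule LeastI_ex)
  then have "(\<phi> ^^ k) x = (\<phi> ^^ (k - nil_index)) 0"
    using k by (metis funpow_add le_add_diff_inverse2 o_apply)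
  also have "\<dots> = 0"
    using R_linear_zero[OF R_linear_funpow[OF linear]] .
  finally show ?thesis .
qed

text \<open>The action of \<open>p(\<phi>)\<close> on M. The sum stops at the nilpotency index, so it is defined for all
  coefficient sequences, not only finitely supported ones.\<close>
definition poly_act :: "'r rpoly \<Rightarrow> 'm \<Rightarrow> 'm" where
  "poly_act p x = (\<Sum>k<nil_index. smul (p k) ((\<phi> ^^ k) x))"

lemma poly_act_zero [simp]: "poly_act (\<lambda>_. 0) x = 0"
  unfolding poly_act_def by simp

lemma poly_act_add: "poly_act (\<lambda>k. p k + q k) x = poly_act p x + poly_act q x"
  unfolding poly_act_def by (simp add: add_smul sum.distrib)

lemma poly_act_sum: "poly_act (\<lambda>k. \<Sum>l\<in>A. F l k) x = (\<Sum>l\<in>A. poly_act (F l) x)"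
  by (induction A rule: infinite_finite_induct) (simp_all add: poly_act_add)

lemma poly_act_scale: "poly_act (\<lambda>k. z * p k) x = smul z (poly_act p x)"
  unfolding poly_act_def by (simp add: smul_sum smul_smul)

lemma poly_act_truncate: "poly_act (\<lambda>k. if k < nil_index then p k else 0) x = poly_act p x"
  unfolding poly_act_def by simp

lemma poly_act_zero_right [simp]: "poly_act p 0 = 0"
  unfolding poly_act_def using R_linear_zero[OF R_linear_funpow[OF linear]] by simp

lemma poly_act_add_right: "poly_act p (x + y) = poly_act p x + poly_act p y"
  unfolding poly_act_def by (simp add: R_linear_add[OF R_linear_funpow[OF linear]] smul_add sum.distrib)

lemma poly_act_sum_right: "poly_act p (sum f A) = (\<Sum>a\<in>A. poly_act p (f a))"
  by (induction A rule: infinite_finite_induct) (simp_all add: poly_act_add_right)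

lemma centralizer_commute_poly_act:
  assumes "\<psi> \<in> centralizer smul \<phi>"
  shows "\<psi> (poly_act p x) = poly_act p (\<psi> x)"
  using assms unfolding poly_act_def
  by (simp add: R_linear_sum R_linear_smul centralizer_R_linear centralizer_commute_funpow)

lemma poly_act_mult: "poly_act (rpoly_mult p q) x = poly_act p (poly_act q x)"
proof -
  let ?N = nil_index
  define g where "g a b = smul (p a * q b) ((\<phi> ^^ (a + b)) x)" for a b
  have "poly_act p (poly_act q x) = (\<Sum>a<?N. \<Sum>b<?N. g a b)"
    unfolding poly_act_def g_def
    by (simp add: R_linear_sum R_linear_smul R_linear_funpow[OF linear] smul_sum smul_smul funpow_add)
  also have "\<dots> = (\<Sum>(a, b)\<in>{..<?N} \<times> {..<?N}. g a b)"
    by (simp add: sum.cartesian_product)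
  also have "\<dots> = (\<Sum>(a, b)\<in>{(a, b). a + b < ?N}. g a b)"
    by (rule sum.mono_neutral_right) (auto simp: g_def, metis funpow_ge_nil_index not_less smul_zero)
  also have "\<dots> = (\<Sum>c<?N. \<Sum>a\<le>c. g a (c - a))"
    by (rule sum.triangle_reindex)
  also have "\<dots> = poly_act (rpoly_mult p q) x"
    unfolding poly_act_def rpoly_mult_def g_def by (simp add: sum_smul)
  finally show ?thesis ..
qed

lemma poly_act_one: "poly_act rpoly_one x = x"
proof (cases "nil_index = 0")
  case True
  then show ?thesis
    unfolding poly_act_def using funpow_ge_nil_index[of 0 x] by simp
next
  case False
  have "poly_act rpoly_one x = (\<Sum>k<nil_index. if k = 0 then x else 0)"
    unfolding poly_act_def by (rule sum.cong) (simp_all add: rpoly_one_def)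
  with False show ?thesis
    by simp
qed

definition rpoly_t :: "'r rpoly" where
  "rpoly_t k = (if k = 1 then 1 else 0)"

lemma poly_act_t: "poly_act rpoly_t x = \<phi> x"
proof (cases "nil_index \<le> 1")
  case True
  then show ?thesis
    unfolding poly_act_def rpoly_t_def using funpow_ge_nil_index[of 1 x] by auto
next
  case False
  have "poly_act rpoly_t x = (\<Sum>k<nil_index. if k = 1 then \<phi> x else 0)"
    unfolding poly_act_def by (rule sum.cong) (simp_all add: rpoly_t_def)
  with False show ?thesis
    by simp
qed

definition poly_span :: "nat \<Rightarrow> (nat \<Rightarrow> 'm) \<Rightarrow> 'm set" where
  "poly_span n g = range (\<lambda>p. \<Sum>j<n. poly_act (p j) (g j))"

lemma submodule_poly_span: "submod (poly_span n g)"
  unfolding submodule_def poly_span_def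
proof (intro conjI ballI allI)
  show "0 \<in> range (\<lambda>p. \<Sum>j<n. poly_act (p j) (g j))"
    by (rule range_eqI[of _ _ "\<lambda>_ _. 0"]) simp
next
  fix x y assume "x \<in> range (\<lambda>p. \<Sum>j<n. poly_act (p j) (g j))" "y \<in> range (\<lambda>p. \<Sum>j<n. poly_act (p j) (g j))"
  then obtain p q where "x = (\<Sum>j<n. poly_act (p j) (g j))" "y = (\<Sum>j<n. poly_act (q j) (g j))"
    by blast
  then show "x + y \<in> range (\<lambda>p. \<Sum>j<n. poly_act (p j) (g j))"
    by (intro range_eqI[of _ _ "\<lambda>j k. p j k + q j k"]) (simp add: poly_act_add sum.distrib)
next
  fix r x assume "x \<in> range (\<lambda>p. \<Sum>j<n. poly_act (p j) (g j))"
  then obtain p where "x = (\<Sum>j<n. poly_act (p j) (g j))"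
    by blast
  then show "smul r x \<in> range (\<lambda>p. \<Sum>j<n. poly_act (p j) (g j))"
    by (intro range_eqI[of _ _ "\<lambda>j k. r * p j k"]) (simp add: poly_act_scale smul_sum)
qed

lemma funpow_poly_span: "y \<in> poly_span n g \<Longrightarrow> (\<phi> ^^ k) y \<in> poly_span n g"
proof (induction k)
  case (Suc k)
  then obtain p where p: "(\<phi> ^^ k) y = (\<Sum>j<n. poly_act (p j) (g j))"
    unfolding poly_span_def by auto
  have "(\<phi> ^^ Suc k) y = poly_act rpoly_t ((\<phi> ^^ k) y)"
    by (simp add: poly_act_t)
  also have "\<dots> = (\<Sum>j<n. poly_act (rpoly_mult rpoly_t (p j)) (g j))"
    unfolding p by (simp add: poly_act_sum_right poly_act_mult)
  finally show ?case
    unfolding poly_span_def by (rule range_eqI[where x = "\<lambda>j. rpoly_mult rpoly_t (p j)"])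
qed simp

lemma generator_in_poly_span: "j < n \<Longrightarrow> g j \<in> poly_span n g"
proof -
  assume j: "j < n"
  have "(\<Sum>i<n. poly_act (if i = j then rpoly_one else (\<lambda>_. 0)) (g i)) = (\<Sum>i<n. if i = j then g i else 0)"
    by (rule sum.cong) (simp_all add: poly_act_one)
  also have "\<dots> = g j"
    using j by simp
  finally show ?thesis
    unfolding poly_span_def
    by (rule range_eqI[where x = "\<lambda>i. if i = j then rpoly_one else (\<lambda>_. 0)", OF sym])
qed

text \<open>Nakayama's lemma for nilpotent \<open>\<phi>\<close>: descending induction shows that every
  \<open>\<phi>\<^sup>k M\<close> lies in the \<open>R[t]\<close>-span, starting from \<open>\<phi>\<^bsup>nil_index\<^esup> M = 0\<close>.\<close>
lemma poly_span_eq_UNIV: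
  assumes gen: "span (g ` {..<n}) + range \<phi> = UNIV"
  shows "poly_span n g = UNIV"
proof -
  let ?N = nil_index and ?P = "poly_span n g"
  have span: "span (g ` {..<n}) \<subseteq> ?P"
    by (rule span_least[OF submodule_poly_span]) (auto intro: generator_in_poly_span)
  have descend: "(\<phi> ^^ (?N - i)) z \<in> ?P" if "i \<le> ?N" for i z
    using that
  proof (induction i arbitrary: z)
    case 0
    then show ?case
      using funpow_ge_nil_index[of ?N z] submodule_zero[OF submodule_poly_span] by simp
  next
    case (Suc i)
    have "z \<in> span (g ` {..<n}) + range \<phi>"
      using gen by simp
    then obtain a w where a: "a \<in> span (g ` {..<n})" and z: "z = a + \<phi> w"
      by (auto elim: set_plus_elim)
    have "?N - i = Suc (?N - Suc i)"
      using Suc.prems by simp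
    then have "(\<phi> ^^ (?N - Suc i)) (\<phi> w) = (\<phi> ^^ (?N - i)) w"
      by (simp add: funpow_swap1)
    then have "(\<phi> ^^ (?N - Suc i)) z = (\<phi> ^^ (?N - Suc i)) a + (\<phi> ^^ (?N - i)) w"
      unfolding z by (simp add: R_linear_add[OF R_linear_funpow[OF linear]])
    moreover have "(\<phi> ^^ (?N - Suc i)) a \<in> ?P"
      using a span by (intro funpow_poly_span) blast
    moreover have "(\<phi> ^^ (?N - i)) w \<in> ?P"
      using Suc.IH Suc.prems by simp
    ultimately show ?case
      using submodule_add[OF submodule_poly_span] by simp
  qed
  have "z \<in> ?P" for z
    using descend[of ?N z] by simp
  then show ?thesis
    by blast
qed

end

locale poly_generated_nilpotent_endomorphism = nilpotent_endomorphism smul \<phi>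
  for smul :: "'r::ring_1 \<Rightarrow> 'm::ab_group_add \<Rightarrow> 'm" and \<phi> +
  fixes m :: nat and g :: "nat \<Rightarrow> 'm"
  assumes poly_span_generators: "poly_span m g = UNIV"
begin

definition represents :: "'r pmat \<Rightarrow> ('m \<Rightarrow> 'm) \<Rightarrow> bool" where
  "represents A \<psi> \<longleftrightarrow> (\<forall>i<m. \<psi> (g i) = (\<Sum>j<m. poly_act (A i j) (g j)))"

lemma centralizer_eqI:
  assumes "\<psi> \<in> centralizer smul \<phi>" "\<chi> \<in> centralizer smul \<phi>" "\<And>i. i < m \<Longrightarrow> \<psi> (g i) = \<chi> (g i)"
  shows "\<psi> = \<chi>"
proof
  fix y
  have "y \<in> poly_span m g"
    using poly_span_generators by simp
  then obtain p where "y = (\<Sum>j<m. poly_act (p j) (g j))"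
    unfolding poly_span_def by blast
  then show "\<psi> y = \<chi> y"
    using assms by (simp add: R_linear_sum centralizer_R_linear centralizer_commute_poly_act)
qed

lemma centralizer_represented:
  assumes "\<psi> \<in> centralizer smul \<phi>"
  shows "\<exists>A. is_pmat m A \<and> represents A \<psi>"
proof -
  have "\<psi> (g i) \<in> poly_span m g" for i
    using poly_span_generators by simp
  then have "\<forall>i. \<exists>p. \<psi> (g i) = (\<Sum>j<m. poly_act (p j) (g j))"
    unfolding poly_span_def by (simp add: image_iff)
  then obtain P where P: "\<And>i. \<psi> (g i) = (\<Sum>j<m. poly_act (P i j) (g j))"
    by metis
  define A where "A i j k = (if i < m \<and> j < m \<and> k < nil_index then P i j k else 0)" for i j k
  have "is_pmat m A"
    unfolding is_pmat_def is_rpoly_def A_def by (auto intro: finite_subset[of _ "{..<nil_index}"])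
  moreover have "represents A \<psi>"
    unfolding represents_def A_def P by (simp add: poly_act_truncate)
  ultimately show ?thesis
    by blast
qed

lemma represents_mult:
  assumes "represents A \<psi>" "represents B \<chi>" "\<chi> \<in> centralizer smul \<phi>"
  shows "represents (pmat_mult m A B) (\<chi> \<circ> \<psi>)"
  unfolding represents_def
proof (intro allI impI)
  fix i assume "i < m"
  have "(\<Sum>j<m. poly_act (pmat_mult m A B i j) (g j))
      = (\<Sum>j<m. \<Sum>l<m. poly_act (A i l) (poly_act (B l j) (g j)))"
    unfolding pmat_mult_def by (simp add: poly_act_sum poly_act_mult)
  also have "\<dots> = (\<Sum>l<m. poly_act (A i l) (\<Sum>j<m. poly_act (B l j) (g j)))"
    by (subst sum.swap) (simp add: poly_act_sum_right)
  also have "\<dots> = (\<Sum>l<m. poly_act (A i l) (\<chi> (g l)))"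
    using assms(2) unfolding represents_def by simp
  also have "\<dots> = \<chi> (\<Sum>l<m. poly_act (A i l) (g l))"
    using assms(3) by (simp add: R_linear_sum centralizer_R_linear centralizer_commute_poly_act)
  also have "\<dots> = (\<chi> \<circ> \<psi>) (g i)"
    using assms(1) \<open>i < m\<close> unfolding represents_def by simp
  finally show "(\<chi> \<circ> \<psi>) (g i) = (\<Sum>j<m. poly_act (pmat_mult m A B i j) (g j))" ..
qed

lemma represents_add:
  "represents A \<psi> \<Longrightarrow> represents B \<chi> \<Longrightarrow> represents (pmat_add A B) (\<lambda>x. \<psi> x + \<chi> x)"
  unfolding represents_def pmat_add_def by (simp add: poly_act_add sum.distrib)

lemma represents_scale:
  "represents A \<psi> \<Longrightarrow> represents (pmat_scale z A) (\<lambda>x. smul z (\<psi> x))"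
  unfolding represents_def pmat_scale_def by (simp add: poly_act_scale smul_sum)

lemma represents_one: "represents (pmat_one m) id"
  unfolding represents_def
proof (intro allI impI)
  fix i assume "i < m"
  have "(\<Sum>j<m. poly_act (pmat_one m i j) (g j)) = (\<Sum>j<m. if j = i then g j else 0)"
    by (rule sum.cong) (auto simp: pmat_one_def poly_act_one)
  with \<open>i < m\<close> show "id (g i) = (\<Sum>j<m. poly_act (pmat_one m i j) (g j))"
    by simp
qed

lemma represents_zero: "represents (\<lambda>i j k. 0) (\<lambda>_. 0)"
  unfolding represents_def by simp

definition rep_algebra :: "'r pmat set" where
  "rep_algebra = {A. is_pmat m A \<and> (\<exists>\<psi>\<in>centralizer smul \<phi>. represents A \<psi>)}"

definition represented :: "'r pmat \<Rightarrow> 'm \<Rightarrow> 'm" where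
  "represented A = (SOME \<psi>. \<psi> \<in> centralizer smul \<phi> \<and> represents A \<psi>)"

lemma rep_algebra_is_pmat: "A \<in> rep_algebra \<Longrightarrow> is_pmat m A"
  unfolding rep_algebra_def by blast

lemma represented_in_centralizer:
  assumes "A \<in> rep_algebra"
  shows "represented A \<in> centralizer smul \<phi>" "represents A (represented A)"
proof -
  have "\<exists>\<psi>. \<psi> \<in> centralizer smul \<phi> \<and> represents A \<psi>"
    using assms unfolding rep_algebra_def by blast
  then have "represented A \<in> centralizer smul \<phi> \<and> represents A (represented A)"
    unfolding represented_def by (rule someI_ex)
  then show "represented A \<in> centralizer smul \<phi>" "represents A (represented A)"
    by auto
qed

lemma rep_algebraI:
  assumes "is_pmat m A" "\<psi> \<in> centralizer smul \<phi>" "represents A \<psi>"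
  shows "A \<in> rep_algebra" "represented A = \<psi>"
proof -
  show A: "A \<in> rep_algebra"
    using assms unfolding rep_algebra_def by blast
  show "represented A = \<psi>"
    using represented_in_centralizer[OF A] assms(2,3)
    by (intro centralizer_eqI) (auto simp: represents_def)
qed

lemma pmat_subalgebra_rep_algebra: "pmat_subalgebra m rep_algebra"
  unfolding pmat_subalgebra_def
proof (intro conjI ballI rep_algebra_is_pmat)
  show "pmat_one m \<in> rep_algebra"
    using rep_algebraI(1)[OF is_pmat_one centralizer_id represents_one] .
  show "(\<lambda>i j k. 0) \<in> rep_algebra"
    using rep_algebraI(1)[OF is_pmat_zero centralizer_zero[OF linear] represents_zero] .
  fix A B assume A: "A \<in> rep_algebra" and B: "B \<in> rep_algebra"
  note A' = represented_in_centralizer[OF A] and B' = represented_in_centralizer[OF B]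
  note AB = rep_algebra_is_pmat[OF A] rep_algebra_is_pmat[OF B]
  show "pmat_add A B \<in> rep_algebra"
    by (rule rep_algebraI(1)[OF is_pmat_add[OF AB] centralizer_add[OF linear A'(1) B'(1)]
          represents_add[OF A'(2) B'(2)]])
  show "pmat_mult m A B \<in> rep_algebra"
    by (rule rep_algebraI(1)[OF is_pmat_mult[OF AB] centralizer_comp[OF B'(1) A'(1)]
          represents_mult[OF A'(2) B'(2) B'(1)]])
next
  fix z :: 'r and A assume z: "z \<in> centre" and A: "A \<in> rep_algebra"
  note A' = represented_in_centralizer[OF A]
  show "pmat_scale z A \<in> rep_algebra"
    by (rule rep_algebraI(1)[OF is_pmat_scale[OF rep_algebra_is_pmat[OF A]]
          centralizer_scale[OF linear z A'(1)] represents_scale[OF A'(2)]])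
qed

lemma op_alg_epi_represented: "op_alg_epi smul m rep_algebra represented (centralizer smul \<phi>)"
  unfolding op_alg_epi_def
proof (intro conjI ballI)
  show "represented ` rep_algebra = centralizer smul \<phi>"
  proof
    show "represented ` rep_algebra \<subseteq> centralizer smul \<phi>"
      using represented_in_centralizer(1) by blast
    show "centralizer smul \<phi> \<subseteq> represented ` rep_algebra"
    proof
      fix \<psi> assume \<psi>: "\<psi> \<in> centralizer smul \<phi>"
      then obtain A where "is_pmat m A" "represents A \<psi>"
        using centralizer_represented by blast
      from rep_algebraI[OF this(1) \<psi> this(2)] show "\<psi> \<in> represented ` rep_algebra"
        by (metis image_eqI)
    qed
  qed
  show "represented (pmat_one m) = id"
    by (rule rep_algebraI(2)[OF is_pmat_one centralizer_id represents_one])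
  fix A B assume A: "A \<in> rep_algebra" and B: "B \<in> rep_algebra"
  note A' = represented_in_centralizer[OF A] and B' = represented_in_centralizer[OF B]
  note AB = rep_algebra_is_pmat[OF A] rep_algebra_is_pmat[OF B]
  show "represented (pmat_add A B) = (\<lambda>x. represented A x + represented B x)"
    by (rule rep_algebraI(2)[OF is_pmat_add[OF AB] centralizer_add[OF linear A'(1) B'(1)]
          represents_add[OF A'(2) B'(2)]])
  show "represented (pmat_mult m B A) = represented A \<circ> represented B"
    by (rule rep_algebraI(2)[OF is_pmat_mult[OF AB(2,1)] centralizer_comp[OF A'(1) B'(1)]
          represents_mult[OF B'(2) A'(2) A'(1)]])
next
  fix z :: 'r and A assume z: "z \<in> centre" and A: "A \<in> rep_algebra"
  note A' = represented_in_centralizer[OF A]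
  show "represented (pmat_scale z A) = (\<lambda>x. smul z (represented A x))"
    by (rule rep_algebraI(2)[OF is_pmat_scale[OF rep_algebra_is_pmat[OF A]]
          centralizer_scale[OF linear z A'(1)] represents_scale[OF A'(2)]])
qed

end

lemma set_subset_image_padded:
  assumes "length xs \<le> n"
  shows "set xs \<subseteq> (\<lambda>j. if j < length xs then xs ! j else 0) ` {..<n}"
proof
  fix x assume "x \<in> set xs"
  then obtain i where "i < length xs" "x = xs ! i"
    by (auto simp: in_set_conv_nth)
  with assms show "x \<in> (\<lambda>j. if j < length xs then xs ! j else 0) ` {..<n}"
    by (intro image_eqI[of _ _ i]) auto
qed

theorem theorem4p4:
  fixes smul :: "'r::ring_1 \<Rightarrow> 'm::ab_group_add \<Rightarrow> 'm"
    and \<phi> :: "'m \<Rightarrow> 'm"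
  assumes "left_module smul"
    and "finitely_generated smul"
    and "semisimple smul"
    and "R_linear smul \<phi>"
    and "nilpotent_map \<phi>"
  shows "\<exists>S f. pmat_subalgebra (comp_length smul (kernel \<phi>)) S \<and>
               op_alg_epi smul (comp_length smul (kernel \<phi>)) S f (centralizer smul \<phi>)"
proof -
  let ?m = "comp_length smul (kernel \<phi>)"
  interpret lmodule smul
    using assms(1) by unfold_locales
  interpret finite_length_module smul
    using finite_length_module_if_semisimple[OF assms(3,2)] .
  interpret nilpotent_endomorphism smul \<phi>
    using assms(4,5) by unfold_locales
  obtain xs where xs: "length xs \<le> ?m" "span (set xs) + range \<phi> = UNIV"
    using generators_mod_image[OF assms(4,2)] by blast
  define g where "g j = (if j < length xs then xs ! j else 0)" for j
  have "set xs \<subseteq> g ` {..<?m}"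
    unfolding g_def using set_subset_image_padded[OF xs(1)] .
  then have "span (g ` {..<?m}) + range \<phi> = UNIV"
    using xs(2) set_plus_mono2[OF span_mono order_refl] by blast
  then interpret poly_generated_nilpotent_endomorphism smul \<phi> ?m g
    by unfold_locales (rule poly_span_eq_UNIV)
  show ?thesis
    using pmat_subalgebra_rep_algebra op_alg_epi_represented by blast
qed

end
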